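(* Let $\mathbb O=\{-m,\dots,0,\dots,M\}$ with integers $m,M\ge1$, and $\theta=0$. For every $x(0)\in\mathbb O^n$: if there exists a finite legal update sequence starting from $x(0)$ along which the opinion trajectory reaches the consensus state $(0,\dots,0)$, then there exists a finite legal update sequence starting from $x(0)$ containing no crossing update along which the opinion trajectory reaches $(0,\dots,0)$.
   Context: Let $n\ge1$, $\mathcal V=\{1,\dots,n\}$, and let $W=(w_{ij})$ be an $n\times n$ row-stochastic matrix. For $x\in\mathbb O^n$, $i\in\mathcal V$, $z\in\mathbb O$, define $C^i_{\mathrm{social}}(z;x)=\sum_{j=1}^n w_{ij}|z-x_j|$ and $P_i(x)=\{z\in\mathbb O: C^i_{\mathrm{social}}(z;x)\le C^i_{\mathrm{social}}(x_i;x),\ |z-\theta|\le |x_i-\theta|\}$. A legal update sequence from $x(0)$ is a finite sequence $(i_1,z_1),\dots,(i_T,z_T)$ with $i_t\in\mathcal V$, generating $x(1),\dots,x(T)$ where $x(t)$ is obtained from $x(t-1)$ by setting coordinate $i_t$ to $z_t$, such that $z_t\in P_{i_t}(x(t-1))$ for every $t$. The update at step $t$ is a crossing update if $(x_{i_t}(t)-\theta)(x_{i_t}(t-1)-\theta)<0$. *)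

theory Defs
  imports Complex_Main
begin

text \<open>Agents are V = {1..n}; a state is a function nat => int, only its values on {1..n} matter.
  W is given as a function nat => nat => real, meaningful on {1..n} x {1..n}.\<close>

definition opinions :: "int \<Rightarrow> int \<Rightarrow> int set" where
  "opinions m M = {-m..M}"

definition row_stochastic :: "nat \<Rightarrow> (nat \<Rightarrow> nat \<Rightarrow> real) \<Rightarrow> bool" where
  "row_stochastic n W \<longleftrightarrow>
     (\<forall>i\<in>{1..n}. \<forall>j\<in>{1..n}. W i j \<ge> 0) \<and> (\<forall>i\<in>{1..n}. (\<Sum>j=1..n. W i j) = 1)"

definition C_social :: "nat \<Rightarrow> (nat \<Rightarrow> nat \<Rightarrow> real) \<Rightarrow> nat \<Rightarrow> int \<Rightarrow> (nat \<Rightarrow> int) \<Rightarrow> real" where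
  "C_social n W i z x = (\<Sum>j=1..n. W i j * real_of_int \<bar>z - x j\<bar>)"

definition P_set :: "int set \<Rightarrow> int \<Rightarrow> nat \<Rightarrow> (nat \<Rightarrow> nat \<Rightarrow> real) \<Rightarrow> nat \<Rightarrow> (nat \<Rightarrow> int) \<Rightarrow> int set" where
  "P_set O\<^sub>s \<theta> n W i x =
     {z \<in> O\<^sub>s. C_social n W i z x \<le> C_social n W i (x i) x \<and> \<bar>z - \<theta>\<bar> \<le> \<bar>x i - \<theta>\<bar>}"

text \<open>Trajectory generated by an update sequence: traj x us t = x(t), for t <= length us.\<close>
fun traj :: "(nat \<Rightarrow> int) \<Rightarrow> (nat \<times> int) list \<Rightarrow> nat \<Rightarrow> nat \<Rightarrow> int" where
  "traj x us 0 = x"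
| "traj x us (Suc t) = (traj x us t)(fst (us ! t) := snd (us ! t))"

definition legal_seq :: "int set \<Rightarrow> int \<Rightarrow> nat \<Rightarrow> (nat \<Rightarrow> nat \<Rightarrow> real) \<Rightarrow> (nat \<Rightarrow> int) \<Rightarrow> (nat \<times> int) list \<Rightarrow> bool" where
  "legal_seq O\<^sub>s \<theta> n W x us \<longleftrightarrow>
     (\<forall>t < length us. fst (us ! t) \<in> {1..n} \<and>
        snd (us ! t) \<in> P_set O\<^sub>s \<theta> n W (fst (us ! t)) (traj x us t))"

definition crossing_update :: "int \<Rightarrow> (nat \<Rightarrow> int) \<Rightarrow> (nat \<times> int) list \<Rightarrow> nat \<Rightarrow> bool" where
  "crossing_update \<theta> x us t \<longleftrightarrow>
     (let i = fst (us ! t) in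
        (traj x us (Suc t) i - \<theta>) * (traj x us t i - \<theta>) < 0)"

definition consensus_zero :: "nat \<Rightarrow> (nat \<Rightarrow> int) \<Rightarrow> bool" where
  "consensus_zero n y \<longleftrightarrow> (\<forall>j\<in>{1..n}. y j = 0)"

definition reaches :: "nat \<Rightarrow> (nat \<Rightarrow> int) \<Rightarrow> (nat \<times> int) list \<Rightarrow> bool" where
  "reaches n x us \<longleftrightarrow> (\<exists>t \<le> length us. consensus_zero n (traj x us t))"

end

theory Submission
  imports Defs
begin

text \<open>The given sequence is replayed on a shadow state \<open>y\<close> in which every agent either agrees
  with the original trajectory or already holds the opinion \<open>0\<close>. An update of an agent that still
  agrees is copied if it does not cross \<open>0\<close> and replaced by a move to \<open>0\<close> otherwise; an agent
  already at \<open>0\<close> is updated to \<open>0\<close>. Zeroing other agents only helps a move towards \<open>0\<close> on the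
  same side, and by convexity of the social cost a crossing move that does not increase the cost
  can be replaced by the move to \<open>0\<close>. So the shadow sequence is legal, never crosses, and reaches
  consensus at \<open>0\<close> whenever the original one does.\<close>

lemma traj_Cons: "traj x (u # us) (Suc t) = traj (x(fst u := snd u)) us t"
  by (induction t) (simp_all only: traj.simps nth_Cons_0 nth_Cons_Suc)

lemma legal_seq_Nil [simp]: "legal_seq Os \<theta> n W x []"
  unfolding legal_seq_def by simp

lemma legal_seq_Cons:
  "legal_seq Os \<theta> n W x (u # us) \<longleftrightarrow>
     fst u \<in> {1..n} \<and> snd u \<in> P_set Os \<theta> n W (fst u) x \<and> legal_seq Os \<theta> n W (x(fst u := snd u)) us"
  unfolding legal_seq_def
  by (auto simp: less_Suc_eq_0_disj traj_Cons simp del: traj.simps(2))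

lemma crossing_update_Cons_0:
  "crossing_update \<theta> x (u # us) 0 \<longleftrightarrow> (snd u - \<theta>) * (x (fst u) - \<theta>) < 0"
  unfolding crossing_update_def by simp

lemma crossing_update_Cons_Suc:
  "crossing_update \<theta> x (u # us) (Suc t) \<longleftrightarrow> crossing_update \<theta> (x(fst u := snd u)) us t"
  unfolding crossing_update_def by (simp only: traj_Cons nth_Cons_Suc)

lemma reaches_Nil [simp]: "reaches n x [] \<longleftrightarrow> consensus_zero n x"
  unfolding reaches_def by simp

lemma reaches_Cons: "reaches n x (u # us) \<longleftrightarrow> consensus_zero n x \<or> reaches n (x(fst u := snd u)) us"
proof -
  have "(\<exists>t\<le>length (u # us). consensus_zero n (traj x (u # us) t)) \<longleftrightarrow>
        consensus_zero n (traj x (u # us) 0) \<or>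
        (\<exists>t\<le>length us. consensus_zero n (traj x (u # us) (Suc t)))"
    by (metis Suc_le_mono length_Cons not0_implies_Suc zero_le)
  then show ?thesis
    unfolding reaches_def by (simp only: traj_Cons traj.simps(1))
qed

lemma abs_diff_gain_le_same_side:
  fixes z a u :: int
  assumes "0 \<le> z * a" and "\<bar>z\<bar> \<le> \<bar>a\<bar>"
  shows "\<bar>z\<bar> - \<bar>a\<bar> \<le> \<bar>z - u\<bar> - \<bar>a - u\<bar>"
  using assms by (smt (verit) mult_nonneg_nonneg mult_nonpos_nonpos zero_le_mult_iff)

text \<open>Convexity of \<open>\<bar>_ - u\<bar>\<close>: if \<open>z\<close> and \<open>a\<close> have opposite signs, then
  \<open>0 = (\<bar>z\<bar> * a + \<bar>a\<bar> * z) / (\<bar>a\<bar> + \<bar>z\<bar>)\<close>.\<close>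
lemma abs_convex_opposite_signs:
  fixes z a u :: int
  assumes "z * a < 0"
  shows "(\<bar>a\<bar> + \<bar>z\<bar>) * \<bar>u\<bar> \<le> \<bar>z\<bar> * \<bar>a - u\<bar> + \<bar>a\<bar> * \<bar>z - u\<bar>"
proof -
  have "\<bar>a - z\<bar> * \<bar>u\<bar> = \<bar>z * (a - u) - a * (z - u)\<bar>"
    by (simp add: algebra_simps abs_mult[symmetric])
  also have "\<dots> \<le> \<bar>z\<bar> * \<bar>a - u\<bar> + \<bar>a\<bar> * \<bar>z - u\<bar>"
    by (metis abs_mult abs_triangle_ineq4)
  moreover have "\<bar>a - z\<bar> = \<bar>a\<bar> + \<bar>z\<bar>"
    using assms by (smt (verit) mult_nonneg_nonneg mult_nonpos_nonpos)
  ultimately show ?thesis by simp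
qed

definition agrees_or_zero :: "nat \<Rightarrow> (nat \<Rightarrow> int) \<Rightarrow> (nat \<Rightarrow> int) \<Rightarrow> bool" where
  "agrees_or_zero n x y \<longleftrightarrow> (\<forall>j\<in>{1..n}. y j = x j \<or> y j = 0)"

lemma consensus_zero_if_agrees_or_zero:
  "agrees_or_zero n x y \<Longrightarrow> consensus_zero n x \<Longrightarrow> consensus_zero n y"
  unfolding agrees_or_zero_def consensus_zero_def by auto

lemma C_social_diff_eq:
  "C_social n W i z x - C_social n W i a x =
     (\<Sum>j=1..n. W i j * (real_of_int \<bar>z - x j\<bar> - real_of_int \<bar>a - x j\<bar>))"
  unfolding C_social_def by (simp add: sum_subtractf[symmetric] algebra_simps)

lemma C_social_le_if_agrees_or_zero:
  assumes nonneg: "\<forall>j\<in>{1..n}. W i j \<ge> 0"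
    and y: "agrees_or_zero n x y"
    and same_side: "0 \<le> z * a" "\<bar>z\<bar> \<le> \<bar>a\<bar>"
    and le: "C_social n W i z x \<le> C_social n W i a x"
  shows "C_social n W i z y \<le> C_social n W i a y"
proof -
  have "C_social n W i z y - C_social n W i a y \<le> C_social n W i z x - C_social n W i a x"
    unfolding C_social_diff_eq
  proof (rule sum_mono)
    fix j assume j: "j \<in> {1..n}"
    have "real_of_int \<bar>z - y j\<bar> - real_of_int \<bar>a - y j\<bar> \<le> real_of_int \<bar>z - x j\<bar> - real_of_int \<bar>a - x j\<bar>"
    proof (cases "y j = x j")
      case False
      then have "y j = 0" using y j by (auto simp: agrees_or_zero_def)
      then show ?thesis using abs_diff_gain_le_same_side[OF same_side, of "x j"] by simp
    qed simp
    then show "W i j * (real_of_int \<bar>z - y j\<bar> - real_of_int \<bar>a - y j\<bar>)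
             \<le> W i j * (real_of_int \<bar>z - x j\<bar> - real_of_int \<bar>a - x j\<bar>)"
      using nonneg j by (simp add: mult_left_mono)
  qed
  then show ?thesis using le by simp
qed

lemma C_social_zero_le_if_crossing:
  assumes nonneg: "\<forall>j\<in>{1..n}. W i j \<ge> 0"
    and crossing: "z * a < 0"
    and le: "C_social n W i z x \<le> C_social n W i a x"
  shows "C_social n W i 0 x \<le> C_social n W i a x"
proof -
  define c where "c = real_of_int \<bar>a\<bar> + real_of_int \<bar>z\<bar>"
  have "a \<noteq> 0"
    using crossing by auto
  then have "c > 0"
    by (simp add: c_def add_pos_nonneg)
  have "c * C_social n W i 0 x \<le> real_of_int \<bar>z\<bar> * C_social n W i a x + real_of_int \<bar>a\<bar> * C_social n W i z x"
    unfolding c_def C_social_def sum_distrib_left sum.distrib[symmetric]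
  proof (rule sum_mono)
    fix j assume j: "j \<in> {1..n}"
    have "real_of_int ((\<bar>a\<bar> + \<bar>z\<bar>) * \<bar>0 - x j\<bar>) \<le> real_of_int (\<bar>z\<bar> * \<bar>a - x j\<bar> + \<bar>a\<bar> * \<bar>z - x j\<bar>)"
      using abs_convex_opposite_signs[OF crossing, of "x j"]
      by (simp only: of_int_le_iff diff_0 abs_minus_cancel)
    then have "W i j * real_of_int ((\<bar>a\<bar> + \<bar>z\<bar>) * \<bar>0 - x j\<bar>)
             \<le> W i j * real_of_int (\<bar>z\<bar> * \<bar>a - x j\<bar> + \<bar>a\<bar> * \<bar>z - x j\<bar>)"
      using nonneg j by (simp add: mult_left_mono)
    then show "(real_of_int \<bar>a\<bar> + real_of_int \<bar>z\<bar>) * (W i j * real_of_int \<bar>0 - x j\<bar>)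
         \<le> real_of_int \<bar>z\<bar> * (W i j * real_of_int \<bar>a - x j\<bar>) + real_of_int \<bar>a\<bar> * (W i j * real_of_int \<bar>z - x j\<bar>)"
      by (simp add: algebra_simps)
  qed
  also have "\<dots> \<le> real_of_int \<bar>z\<bar> * C_social n W i a x + real_of_int \<bar>a\<bar> * C_social n W i a x"
    using le by (simp add: mult_left_mono)
  also have "\<dots> = c * C_social n W i a x"
    by (simp add: c_def algebra_simps)
  finally show ?thesis
    using \<open>c > 0\<close> by simp
qed

definition shadow_update :: "(nat \<Rightarrow> int) \<Rightarrow> (nat \<Rightarrow> int) \<Rightarrow> nat \<Rightarrow> int \<Rightarrow> int" where
  "shadow_update x y i z = (if y i = x i \<and> 0 \<le> z * x i then z else 0)"

lemma shadow_update_not_crossing: "\<not> shadow_update x y i z * y i < 0"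
  unfolding shadow_update_def by (auto simp: mult.commute)

lemma agrees_or_zero_shadow_update:
  "agrees_or_zero n x y \<Longrightarrow> agrees_or_zero n (x(i := z)) (y(i := shadow_update x y i z))"
  unfolding agrees_or_zero_def shadow_update_def by auto

lemma shadow_update_in_P_set:
  assumes nonneg: "\<forall>j\<in>{1..n}. W i j \<ge> 0" and "0 \<in> Os" and "i \<in> {1..n}"
    and y: "agrees_or_zero n x y"
    and z: "z \<in> P_set Os 0 n W i x"
  shows "shadow_update x y i z \<in> P_set Os 0 n W i y"
proof -
  have "z \<in> Os" and cost: "C_social n W i z x \<le> C_social n W i (x i) x" and closer: "\<bar>z\<bar> \<le> \<bar>x i\<bar>"
    using z by (auto simp: P_set_def)
  consider (copy) "y i = x i" "0 \<le> z * x i" | (crossing) "y i = x i" "z * x i < 0" | (at_zero) "y i = 0"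
    using y \<open>i \<in> {1..n}\<close> unfolding agrees_or_zero_def by force
  then show ?thesis
  proof cases
    case copy
    then show ?thesis
      using C_social_le_if_agrees_or_zero[of n W i x y z "x i"] nonneg y cost closer \<open>z \<in> Os\<close>
      by (auto simp: shadow_update_def P_set_def)
  next
    case crossing
    then have "C_social n W i 0 x \<le> C_social n W i (x i) x"
      using C_social_zero_le_if_crossing[OF nonneg _ cost] by simp
    then show ?thesis
      using C_social_le_if_agrees_or_zero[of n W i x y 0 "x i"] nonneg y crossing \<open>0 \<in> Os\<close>
      by (auto simp: shadow_update_def P_set_def)
  next
    case at_zero
    then show ?thesis
      using \<open>0 \<in> Os\<close> closer by (auto simp: shadow_update_def P_set_def)
  qed
qed

lemma crossing_free_shadow_seq:
  assumes "legal_seq Os 0 n W x us" "reaches n x us" "0 \<in> Os"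
    and "\<forall>i\<in>{1..n}. \<forall>j\<in>{1..n}. W i j \<ge> 0"
    and "agrees_or_zero n x y"
  shows "\<exists>vs. legal_seq Os 0 n W y vs \<and> (\<forall>t < length vs. \<not> crossing_update 0 y vs t) \<and> reaches n y vs"
  using assms
proof (induction us arbitrary: x y)
  case Nil
  then show ?case
    by (intro exI[of _ "[]"]) (simp add: consensus_zero_if_agrees_or_zero)
next
  case (Cons u us)
  show ?case
  proof (cases "consensus_zero n x")
    case True
    then show ?thesis
      using Cons.prems(5) by (intro exI[of _ "[]"]) (simp add: consensus_zero_if_agrees_or_zero)
  next
    case False
    obtain i z where u: "u = (i, z)" by force
    have i: "i \<in> {1..n}" and z: "z \<in> P_set Os 0 n W i x" and legal: "legal_seq Os 0 n W (x(i := z)) us"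
      using Cons.prems(1) u by (auto simp: legal_seq_Cons)
    have reaches: "reaches n (x(i := z)) us"
      using Cons.prems(2) False u by (simp add: reaches_Cons)
    define z' where "z' = shadow_update x y i z"
    obtain vs where vs: "legal_seq Os 0 n W (y(i := z')) vs"
        "\<forall>t < length vs. \<not> crossing_update 0 (y(i := z')) vs t" "reaches n (y(i := z')) vs"
      using Cons.IH[OF legal reaches Cons.prems(3,4)] agrees_or_zero_shadow_update[OF Cons.prems(5)]
      unfolding z'_def by blast
    have "z' \<in> P_set Os 0 n W i y"
      unfolding z'_def using shadow_update_in_P_set Cons.prems(3-5) i z by blast
    moreover have "\<not> z' * y i < 0"
      unfolding z'_def by (rule shadow_update_not_crossing)
    ultimately show ?thesis
      using vs i
      by (intro exI[of _ "(i, z') # vs"])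
        (auto simp: legal_seq_Cons reaches_Cons crossing_update_Cons_0 crossing_update_Cons_Suc
              less_Suc_eq_0_disj)
  qed
qed

theorem lemma3:
  fixes n :: nat and m M :: int and W :: "nat \<Rightarrow> nat \<Rightarrow> real" and x0 :: "nat \<Rightarrow> int"
  assumes "n \<ge> 1" and "m \<ge> 1" and "M \<ge> 1"
    and "row_stochastic n W"
    and "\<forall>j\<in>{1..n}. x0 j \<in> opinions m M"
    and "\<exists>us. legal_seq (opinions m M) 0 n W x0 us \<and> reaches n x0 us"
  shows "\<exists>us. legal_seq (opinions m M) 0 n W x0 us
               \<and> (\<forall>t < length us. \<not> crossing_update 0 x0 us t)
               \<and> reaches n x0 us"
proof -
  obtain us where "legal_seq (opinions m M) 0 n W x0 us" "reaches n x0 us"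
    using assms(6) by blast
  moreover have "0 \<in> opinions m M"
    using assms(2,3) by (simp add: opinions_def)
  moreover have "\<forall>i\<in>{1..n}. \<forall>j\<in>{1..n}. W i j \<ge> 0"
    using assms(4) by (simp add: row_stochastic_def)
  moreover have "agrees_or_zero n x0 x0"
    by (simp add: agrees_or_zero_def)
  ultimately show ?thesis
    by (rule crossing_free_shadow_seq)
qed

end
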